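(* Let $(\gamma_n)$ be a sequence of positive reals satisfying conditions (C1)–(C7) below, with associated orthonormal polynomials $p_n$ and operators $K^n$. For $\omega\in\mathbb{R}$ let $e_\omega(t)=e^{i\omega t}$. Then for every $\omega\in\mathbb{R}$, $e_\omega\in\mathcal{L}$ and $\lim_{n\to\infty}\gamma_n\bigl(|K^n[e_\omega(t)]|^2+|K^{n+1}[e_\omega(t)]|^2\bigr)$ is a positive finite number (so $e_\omega$ represents a nonzero element of $\mathcal{L}_2$). Moreover, for all real $\omega\neq\sigma$ and all $t\in\mathbb{R}$, \[ \lim_{n\to\infty}\frac{\sum_{k=0}^n K^k_t[e^{i\omega t}]\,K^k_t\bigl[\overline{e^{i\sigma t}}\bigr]}{\sum_{j=0}^n \frac{1}{\gamma_j}}=0. \]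
   Context: Given positive reals $\gamma_n$, set $\gamma_{-1}=1$, $p_{-1}=0$, $p_0=1$ and $\gamma_n p_{n+1}(\omega)=\omega p_n(\omega)-\gamma_{n-1}p_{n-1}(\omega)$ ($n\ge0$). Let $\Delta_n=\gamma_{n+1}-\gamma_n$, $\Delta^2_n=\Delta_{n+1}-\Delta_n$. Conditions: (C1) $\gamma_n\to\infty$; (C2) $\Delta_n\to0$; (C3) there exist $n_0,m_0$ with $\gamma_{n+m}>\gamma_n$ for all $n\ge n_0$, $m\ge m_0$; (C4) $\sum 1/\gamma_j=\infty$; (C5) some $\kappa>1$ has $\sum\gamma_j^{-\kappa}<\infty$; (C6) $\sum|\Delta_n|/\gamma_n^2<\infty$; (C7) $\sum|\Delta^2_n|/\gamma_n<\infty$. Let $C^\infty_{\mathbb{R}\to\mathbb{C}}$ be the set of functions $f:\mathbb{R}\to\mathbb{C}$ whose real and imaginary parts are infinitely differentiable. Define the differential operators $K^n_t=(-i)^n p_n\!\left(i\frac{d}{dt}\right)$ (so $K^n_t[e^{i\omega t}]=i^n p_n(\omega)e^{i\omega t}$). $\mathcal{L}$ is the set of $f\in C^\infty_{\mathbb{R}\to\mathbb{C}}$ such that $\beta_n^f(t)=\gamma_n(|K^n[f(t)]|^2+|K^{n+1}[f(t)]|^2)$ converges uniformly on every compact interval; $\mathcal{L}_0$ is the subset of those $f$ for which this limit is $0$, and $\mathcal{L}_2=\mathcal{L}/\mathcal{L}_0$. *)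

theory Defs
  imports "HOL-Analysis.Analysis" "HOL-Computational_Algebra.Polynomial"
begin

text \<open>Orthonormal polynomials p_n as real polynomials, from the three-term recurrence
  with gamma_{-1} = 1, p_{-1} = 0, p_0 = 1.\<close>
fun opoly :: "(nat \<Rightarrow> real) \<Rightarrow> nat \<Rightarrow> real poly" where
  "opoly g 0 = 1"
| "opoly g (Suc 0) = smult (1 / g 0) [:0, 1:]"
| "opoly g (Suc (Suc n)) =
     smult (1 / g (Suc n)) ([:0, 1:] * opoly g (Suc n) - smult (g n) (opoly g n))"

fun vdiff :: "nat \<Rightarrow> (real \<Rightarrow> complex) \<Rightarrow> real \<Rightarrow> complex" where
  "vdiff 0 f = f"
| "vdiff (Suc k) f = (\<lambda>t. vector_derivative (vdiff k f) (at t))"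

definition smoothRC :: "(real \<Rightarrow> complex) \<Rightarrow> bool" where
  "smoothRC f \<longleftrightarrow> (\<forall>k t. (vdiff k f has_vector_derivative vdiff (Suc k) f t) (at t))"

text \<open>K^n_t = (-i)^n p_n(i d/dt).\<close>
definition Kop :: "(nat \<Rightarrow> real) \<Rightarrow> nat \<Rightarrow> (real \<Rightarrow> complex) \<Rightarrow> real \<Rightarrow> complex" where
  "Kop g n f t = (- \<i>) ^ n *
     (\<Sum>k\<le>degree (opoly g n). complex_of_real (coeff (opoly g n) k) * \<i> ^ k * vdiff k f t)"

definition beta :: "(nat \<Rightarrow> real) \<Rightarrow> (real \<Rightarrow> complex) \<Rightarrow> nat \<Rightarrow> real \<Rightarrow> real" where
  "beta g f n t = g n * ((cmod (Kop g n f t))\<^sup>2 + (cmod (Kop g (Suc n) f t))\<^sup>2)"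

definition classL :: "(nat \<Rightarrow> real) \<Rightarrow> (real \<Rightarrow> complex) set" where
  "classL g = {f. smoothRC f \<and>
     (\<exists>h. \<forall>a b. uniform_limit {a..b} (beta g f) h sequentially)}"

end

theory Submission
  imports Defs
begin

(* Since K^n[e_w] = i^n p_n(w) e_w, the sequence beta_n(e_w) is the constant-in-t sequence
   gamma_n (p_n(w)^2 + p_{n+1}(w)^2).  For the three-term recurrence the "energy"
   gamma_n (p_n^2 + p_{n+1}^2) - w p_n p_{n+1} changes by (Delta_n / gamma_{n+1}) times a quadratic
   form of size gamma_n (p_n^2 + p_{n+1}^2); after adding half of that form as a correction, the
   relative increments become O(|Delta^2_n| / gamma_n + |Delta_{n+1}| / gamma_n^2), which are summable
   by (C6) and (C7).  So the corrected energy converges to a positive limit, and by (C1), (C2) so does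
   beta_n.  For w <> s the kernel sum is a unimodular factor times sum_k p_k(w) p_k(s), which by the
   Christoffel-Darboux formula and Cauchy-Schwarz is at most sqrt(beta_n(w) beta_n(s)) / |w - s|,
   hence bounded, while sum_j 1/gamma_j diverges by (C4). *)

lemma poly_opoly_Suc_Suc:
  assumes "g (Suc n) \<noteq> 0"
  shows "g (Suc n) * poly (opoly g (Suc (Suc n))) x = x * poly (opoly g (Suc n)) x - g n * poly (opoly g n) x"
  using assms by simp

lemma poly_opoly_uminus: "poly (opoly g n) (- x) = (-1) ^ n * poly (opoly g n) x"
  by (induction g n rule: opoly.induct) (auto simp: algebra_simps)

lemma poly_opoly_consecutive_nonzero:
  assumes pos: "\<And>n. 0 < g n"
  shows "poly (opoly g n) x \<noteq> 0 \<or> poly (opoly g (Suc n)) x \<noteq> 0"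
proof (induction n)
  case (Suc n)
  show ?case
  proof (rule ccontr)
    assume "\<not> ?case"
    then have "poly (opoly g (Suc n)) x = 0" "poly (opoly g (Suc (Suc n))) x = 0" by auto
    with poly_opoly_Suc_Suc[of g n x] pos[of n] pos[of "Suc n"] have "poly (opoly g n) x = 0" by simp
    with Suc.IH \<open>poly (opoly g (Suc n)) x = 0\<close> show False by simp
  qed
qed simp

lemma christoffel_darboux:
  assumes pos: "\<And>n. 0 < g n"
  shows "(a - b) * (\<Sum>k\<le>n. poly (opoly g k) a * poly (opoly g k) b)
    = g n * (poly (opoly g (Suc n)) a * poly (opoly g n) b - poly (opoly g n) a * poly (opoly g (Suc n)) b)"
proof (induction n)
  case 0
  then show ?case using pos[of 0] by (simp add: field_simps)
next
  case (Suc n)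
  have "g (Suc n) \<noteq> 0" using pos[of "Suc n"] by simp
  note rec = poly_opoly_Suc_Suc[of g n, OF this]
  have "g (Suc n) * (poly (opoly g (Suc (Suc n))) a * poly (opoly g (Suc n)) b
          - poly (opoly g (Suc n)) a * poly (opoly g (Suc (Suc n))) b)
    = (g (Suc n) * poly (opoly g (Suc (Suc n))) a) * poly (opoly g (Suc n)) b
          - poly (opoly g (Suc n)) a * (g (Suc n) * poly (opoly g (Suc (Suc n))) b)"
    by (simp add: algebra_simps)
  also have "\<dots> = (a - b) * (\<Sum>k\<le>Suc n. poly (opoly g k) a * poly (opoly g k) b)"
    unfolding rec sum.atMost_Suc distrib_left Suc.IH by (simp add: algebra_simps)
  finally show ?case by simp
qed

lemma abs_cross_difference_le: "\<bar>a * d - b * c\<bar> \<le> sqrt ((a\<^sup>2 + b\<^sup>2) * (c\<^sup>2 + (d::real)\<^sup>2))"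
proof (rule real_le_rsqrt)
  have "(a\<^sup>2 + b\<^sup>2) * (c\<^sup>2 + d\<^sup>2) = (a * d - b * c)\<^sup>2 + (a * c + b * d)\<^sup>2"
    by (simp add: algebra_simps power2_eq_square)
  then show "\<bar>a * d - b * c\<bar>\<^sup>2 \<le> (a\<^sup>2 + b\<^sup>2) * (c\<^sup>2 + d\<^sup>2)" by simp
qed

abbreviation plane_wave :: "real \<Rightarrow> real \<Rightarrow> complex" where
  "plane_wave \<omega> t \<equiv> exp (\<i> * complex_of_real (\<omega> * t))"

lemma has_vector_derivative_plane_wave:
  "((\<lambda>s. (\<i> * of_real \<omega>) ^ k * plane_wave \<omega> s) has_vector_derivative
     (\<i> * of_real \<omega>) ^ Suc k * plane_wave \<omega> t) (at t)"
proof -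
  have "((\<lambda>z. (\<i> * of_real \<omega>) ^ k * exp (\<i> * of_real \<omega> * z)) has_field_derivative
     (\<i> * of_real \<omega>) ^ Suc k * exp (\<i> * of_real \<omega> * of_real t)) (at (of_real t))"
    by (auto intro!: derivative_eq_intros simp: algebra_simps)
  from has_vector_derivative_real_field[OF this] show ?thesis by (simp add: algebra_simps)
qed

lemma vdiff_plane_wave: "vdiff k (plane_wave \<omega>) = (\<lambda>s. (\<i> * of_real \<omega>) ^ k * plane_wave \<omega> s)"
proof (induction k)
  case (Suc k)
  show ?case
    unfolding vdiff.simps Suc.IH by (rule ext) (rule vector_derivative_at[OF has_vector_derivative_plane_wave])
qed simp

lemma smoothRC_plane_wave: "smoothRC (plane_wave \<omega>)"
  unfolding smoothRC_def vdiff_plane_wave using has_vector_derivative_plane_wave by blast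

lemma Kop_plane_wave: "Kop g n (plane_wave \<omega>) t = \<i> ^ n * of_real (poly (opoly g n) \<omega>) * plane_wave \<omega> t"
proof -
  have "\<i> ^ k * (\<i> * of_real \<omega>) ^ k = complex_of_real ((- \<omega>) ^ k)" for k
    by (simp add: power_mult_distrib flip: mult.assoc power_mult_distrib)
  then have "(\<Sum>k\<le>degree (opoly g n). of_real (coeff (opoly g n) k) * \<i> ^ k * ((\<i> * of_real \<omega>) ^ k * plane_wave \<omega> t))
      = (\<Sum>k\<le>degree (opoly g n). of_real (coeff (opoly g n) k * (- \<omega>) ^ k) * plane_wave \<omega> t)"
    by (intro sum.cong) (simp_all add: mult.assoc)
  also have "\<dots> = of_real (poly (opoly g n) (- \<omega>)) * plane_wave \<omega> t"
    unfolding poly_altdef of_real_sum sum_distrib_right ..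
  finally have "Kop g n (plane_wave \<omega>) t = (- \<i>) ^ n * of_real ((-1) ^ n * poly (opoly g n) \<omega>) * plane_wave \<omega> t"
    unfolding Kop_def vdiff_plane_wave poly_opoly_uminus by (simp add: mult.assoc)
  also have "\<dots> = \<i> ^ n * of_real (poly (opoly g n) \<omega>) * plane_wave \<omega> t"
    by (simp add: power_mult_distrib flip: power_mult_distrib)
  finally show ?thesis .
qed

lemma Kop_plane_wave_mult_Kop_cnj:
  "Kop g k (plane_wave \<omega>) t * Kop g k (\<lambda>s. cnj (plane_wave \<sigma> s)) t
    = of_real (poly (opoly g k) \<omega> * poly (opoly g k) \<sigma>) * (plane_wave \<omega> t * plane_wave (- \<sigma>) t)"
proof -
  have cnj: "(\<lambda>s. cnj (plane_wave \<sigma> s)) = plane_wave (- \<sigma>)" by (simp add: exp_cnj)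
  have "\<i> ^ k * \<i> ^ k * complex_of_real ((-1) ^ k) = 1"
    by (simp add: power_mult_distrib[symmetric] power_minus' flip: power_add mult_2)
  then show ?thesis unfolding cnj Kop_plane_wave poly_opoly_uminus by (simp add: mult_ac)
qed

lemma beta_plane_wave:
  "beta g (plane_wave \<omega>) n t = g n * ((poly (opoly g n) \<omega>)\<^sup>2 + (poly (opoly g (Suc n)) \<omega>)\<^sup>2)"
  unfolding beta_def Kop_plane_wave by (simp add: norm_mult norm_power)

lemma uniform_limit_of_tendsto:
  assumes "(X \<longlongrightarrow> c) F"
  shows "uniform_limit S (\<lambda>n t. X n) (\<lambda>t. c) F"
  unfolding uniform_limit_iff using assms by (auto dest: tendstoD elim: eventually_mono)

lemma filterlim_sum_atMost_at_top:
  fixes f :: "nat \<Rightarrow> real"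
  assumes f: "\<And>n. 0 \<le> f n" and "\<not> summable f"
  shows "filterlim (\<lambda>n. \<Sum>j\<le>n. f j) at_top sequentially"
  unfolding filterlim_at_top
proof
  fix Z
  have "\<exists>n. Z \<le> (\<Sum>j\<le>n. f j)"
    using assms bounded_imp_summable[of f Z] by (force simp: not_le less_imp_le)
  then obtain n0 where n0: "Z \<le> (\<Sum>j\<le>n0. f j)" by blast
  have "Z \<le> (\<Sum>j\<le>n. f j)" if "n0 \<le> n" for n
    using n0 sum_mono2[of "{..n}" "{..n0}" f] that f by fastforce
  then show "eventually (\<lambda>n. Z \<le> (\<Sum>j\<le>n. f j)) sequentially"
    unfolding eventually_sequentially by blast
qed

(* ln T telescopes, and |ln (T (m+1) / T m)| <= 2 e m once e m < 1/2. *)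
lemma tendsto_pos_if_summable_relative_increments:
  fixes T e :: "nat \<Rightarrow> real"
  assumes pos: "\<And>m. N \<le> m \<Longrightarrow> 0 < T m"
    and incr: "\<And>m. N \<le> m \<Longrightarrow> \<bar>T (Suc m) - T m\<bar> \<le> e m * T m"
    and "summable e"
  shows "\<exists>c>0. T \<longlonglongrightarrow> c"
proof -
  obtain N' where N': "\<And>m. N' \<le> m \<Longrightarrow> e m < 1/2"
    using order_tendstoD(2)[OF summable_LIMSEQ_zero[OF \<open>summable e\<close>], of "1/2"]
    unfolding eventually_sequentially by auto
  define a where "a k = ln (T (Suc k)) - ln (T k)" for k
  have "norm (a k) \<le> 2 * e k" if k: "max N N' \<le> k" for k
  proof -
    define r where "r = T (Suc k) / T k - 1"
    have Tk: "0 < T k" "0 < T (Suc k)" using pos k by auto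
    have "\<bar>r\<bar> = \<bar>T (Suc k) - T k\<bar> / T k" unfolding r_def using Tk by (simp add: field_simps)
    also have "\<dots> \<le> e k" using incr[of k] k Tk by (simp add: field_simps)
    finally have r: "\<bar>r\<bar> \<le> e k" .
    with N'[of k] k have r2: "\<bar>r\<bar> \<le> 1/2" by auto
    have "a k = ln (1 + r)" unfolding a_def r_def using Tk by (simp add: ln_div)
    moreover have "\<bar>ln (1 + r) - r\<bar> \<le> 2 * r\<^sup>2" by (rule abs_ln_one_plus_x_minus_x_bound[OF r2])
    moreover have "2 * r\<^sup>2 \<le> \<bar>r\<bar>"
      using mult_left_mono[OF r2 abs_ge_zero[of r]] by (simp add: power2_eq_square)
    ultimately show ?thesis using r by simp
  qed
  then have "summable a"
    by (intro summable_comparison_test'[OF summable_mult[OF \<open>summable e\<close>, of 2], of "max N N'"])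
  then have "(\<lambda>n. \<Sum>k<n. a k) \<longlonglongrightarrow> suminf a" by (rule summable_LIMSEQ)
  moreover have "(\<Sum>k<n. a k) = ln (T n) - ln (T 0)" for n
    unfolding a_def by (rule sum_lessThan_telescope)
  ultimately have "(\<lambda>n. ln (T n) - ln (T 0) + ln (T 0)) \<longlonglongrightarrow> suminf a + ln (T 0)"
    by (intro tendsto_add) auto
  then have "(\<lambda>n. exp (ln (T n))) \<longlonglongrightarrow> exp (suminf a + ln (T 0))"
    by (intro tendsto_exp) simp
  moreover have "eventually (\<lambda>n. exp (ln (T n)) = T n) sequentially"
    unfolding eventually_sequentially using pos by auto
  ultimately have "T \<longlonglongrightarrow> exp (suminf a + ln (T 0))" by (rule Lim_transform_eventually)
  then show ?thesis by (intro exI[of _ "exp (suminf a + ln (T 0))"]) simp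
qed

(* Local quantities at one step of the recurrence: x, y, z stand for p_n(w), p_{n+1}(w), p_{n+2}(w)
   and g0, g1, g2 (or g, g') for gamma_n, gamma_{n+1}, gamma_{n+2}, so the recurrence reads
   g1 z = w y - g0 x. *)
definition energy :: "real \<Rightarrow> real \<Rightarrow> real \<Rightarrow> real \<Rightarrow> real" where
  "energy g w x y = g * (x\<^sup>2 + y\<^sup>2) - w * x * y"

definition drift :: "real \<Rightarrow> real \<Rightarrow> real \<Rightarrow> real \<Rightarrow> real \<Rightarrow> real" where
  "drift g g' w x y = g' * y\<^sup>2 - g * x\<^sup>2 + w * x * y"

definition corrected_energy :: "real \<Rightarrow> real \<Rightarrow> real \<Rightarrow> real \<Rightarrow> real \<Rightarrow> real" where
  "corrected_energy g g' w x y = energy g w x y + (g' - g) / (2 * g') * drift g g' w x y"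

lemma energy_step:
  assumes "g1 \<noteq> 0" and "g1 * z = w * y - g0 * x"
  shows "energy g1 w y z - energy g0 w x y = (g1 - g0) / g1 * drift g0 g1 w x y"
proof -
  have z: "z = (w * y - g0 * x) / g1" using assms by (simp add: field_simps)
  show ?thesis using assms(1)
    by (simp add: z energy_def drift_def field_simps power2_eq_square)
qed

lemma corrected_energy_step:
  assumes "g1 \<noteq> 0" "g2 \<noteq> 0" and rec: "g1 * z = w * y - g0 * x"
  shows "corrected_energy g1 g2 w y z - corrected_energy g0 g1 w x y =
    (((g1 - g0) / g1 - (g2 - g1) / g2) * drift g0 g1 w x y
       + (g2 - g1) / g2 * (drift g0 g1 w x y + drift g1 g2 w y z)) / 2"
proof -
  have E1: "energy g1 w y z = energy g0 w x y + (g1 - g0) / g1 * drift g0 g1 w x y"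
    using energy_step[OF assms(1) rec] by simp
  show ?thesis
    unfolding corrected_energy_def E1 using assms(1,2) by (simp add: field_simps)
qed

lemma drift_sum_eq:
  assumes "g1 \<noteq> 0" and "g1 * z = w * y - g0 * x"
  shows "g1 * (drift g0 g1 w x y + drift g1 g2 w y z) =
      (g0 * ((g2 - g1) - (g1 - g0)) - g0 * (g1 - g0) * (g2 - g1) / g1) * x\<^sup>2
    + (w * (g1 - g0) - 2 * w * g0 * g2 / g1) * (x * y) + (w\<^sup>2 * g2 / g1 + w\<^sup>2) * y\<^sup>2"
proof -
  have z: "z = (w * y - g0 * x) / g1" using assms by (simp add: field_simps)
  show ?thesis using assms(1)
    by (simp add: z drift_def field_simps power2_eq_square)
qed

lemma abs_mult_le_half_sum_sq: "2 * \<bar>x * y\<bar> \<le> x\<^sup>2 + (y::real)\<^sup>2"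
proof -
  have "0 \<le> (\<bar>x\<bar> - \<bar>y\<bar>)\<^sup>2" by simp
  then show ?thesis by (simp add: power2_eq_square algebra_simps abs_mult)
qed

lemma abs_quadratic_form_le:
  fixes a b c x y :: real
  shows "\<bar>a * x\<^sup>2 + b * (x * y) + c * y\<^sup>2\<bar> \<le> (\<bar>a\<bar> + \<bar>b\<bar> / 2 + \<bar>c\<bar>) * (x\<^sup>2 + y\<^sup>2)"
proof -
  have "\<bar>a * x\<^sup>2\<bar> \<le> \<bar>a\<bar> * (x\<^sup>2 + y\<^sup>2)" "\<bar>c * y\<^sup>2\<bar> \<le> \<bar>c\<bar> * (x\<^sup>2 + y\<^sup>2)"
    by (simp_all add: abs_mult mult_left_mono)
  moreover have "\<bar>b * (x * y)\<bar> \<le> \<bar>b\<bar> / 2 * (x\<^sup>2 + y\<^sup>2)"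
    using mult_left_mono[OF abs_mult_le_half_sum_sq[of x y], of "\<bar>b\<bar>"] by (simp add: abs_mult)
  ultimately show ?thesis by (simp add: distrib_right abs_le_iff) linarith
qed

lemma abs_cross_term_le:
  fixes g w x y :: real
  assumes "\<bar>w\<bar> \<le> g"
  shows "\<bar>w * x * y\<bar> \<le> g * (x\<^sup>2 + y\<^sup>2) / 2"
proof -
  have "\<bar>w * x * y\<bar> = \<bar>w\<bar> * \<bar>x * y\<bar>" by (simp add: abs_mult mult.assoc)
  also have "\<dots> \<le> g * ((x\<^sup>2 + y\<^sup>2) / 2)"
    using abs_mult_le_half_sum_sq[of x y] assms by (intro mult_mono) auto
  finally show ?thesis by simp
qed

lemma energy_ge:
  assumes "\<bar>w\<bar> \<le> g"
  shows "g * (x\<^sup>2 + y\<^sup>2) / 2 \<le> energy g w x y"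
  using abs_cross_term_le[OF assms, of x y] unfolding energy_def by linarith

lemma abs_drift_le:
  assumes "\<bar>w\<bar> \<le> g" and "0 \<le> g'" and "g' \<le> 2 * g"
  shows "\<bar>drift g g' w x y\<bar> \<le> 4 * g * (x\<^sup>2 + y\<^sup>2)"
proof -
  have "0 \<le> g * x\<^sup>2" "0 \<le> g * y\<^sup>2" "0 \<le> g' * y\<^sup>2"
    using assms by auto
  moreover have "g' * y\<^sup>2 \<le> 2 * g * y\<^sup>2"
    using assms by (intro mult_right_mono) auto
  moreover note abs_cross_term_le[OF assms(1), of x y]
  ultimately show ?thesis
    unfolding drift_def abs_le_iff by (simp add: distrib_left)
qed

lemma corrected_energy_bounds:
  assumes "16 \<le> g" and "\<bar>w\<bar> \<le> g" and "\<bar>g' - g\<bar> \<le> 1"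
  shows "\<bar>corrected_energy g g' w x y - energy g w x y\<bar> \<le> 4 * \<bar>g' - g\<bar> * (x\<^sup>2 + y\<^sup>2)"
    and "g * (x\<^sup>2 + y\<^sup>2) / 4 \<le> corrected_energy g g' w x y"
proof -
  let ?u = "x\<^sup>2 + y\<^sup>2"
  have "0 < g'" "g \<le> 2 * g'" "g' \<le> 2 * g" using assms by auto
  have "\<bar>corrected_energy g g' w x y - energy g w x y\<bar> = \<bar>g' - g\<bar> / (2 * g') * \<bar>drift g g' w x y\<bar>"
    using \<open>0 < g'\<close> by (simp add: corrected_energy_def abs_mult)
  also have "\<dots> \<le> \<bar>g' - g\<bar> / (2 * g') * (4 * g * ?u)"
    using abs_drift_le assms \<open>0 < g'\<close> \<open>g' \<le> 2 * g\<close> by (intro mult_left_mono) auto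
  also have "\<dots> = \<bar>g' - g\<bar> * (4 * ?u) * (g / (2 * g'))" by (simp add: field_simps)
  also have "\<dots> \<le> \<bar>g' - g\<bar> * (4 * ?u) * 1"
    using \<open>0 < g'\<close> \<open>g \<le> 2 * g'\<close> by (intro mult_left_mono) auto
  finally show close: "\<bar>corrected_energy g g' w x y - energy g w x y\<bar> \<le> 4 * \<bar>g' - g\<bar> * ?u"
    by (simp add: algebra_simps)
  have "4 * \<bar>g' - g\<bar> * ?u \<le> 4 * ?u" using mult_right_mono[OF assms(3), of ?u] by simp
  also have "\<dots> \<le> (g / 4) * ?u" using assms(1) by (intro mult_right_mono) auto
  also have "\<dots> = g * ?u / 4" by simp
  finally show "g * ?u / 4 \<le> corrected_energy g g' w x y"
    using close energy_ge[OF assms(2), of x y] by linarith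
qed

lemma abs_drift_sum_le:
  assumes "16 \<le> g0" and w: "\<bar>w\<bar> \<le> g0" and "\<bar>g1 - g0\<bar> \<le> 1" and "\<bar>g2 - g1\<bar> \<le> 1"
    and rec: "g1 * z = w * y - g0 * x"
  shows "\<bar>drift g0 g1 w x y + drift g1 g2 w y z\<bar> \<le> (6 + 12 * \<bar>w\<bar>) * (x\<^sup>2 + y\<^sup>2)"
proof -
  let ?u = "x\<^sup>2 + y\<^sup>2"
  define d0 d1 where "d0 = g1 - g0" and "d1 = g2 - g1"
  have g1: "0 < g1" "0 < g2" "g0 \<le> 2 * g1" "g2 \<le> 2 * g1" and d: "\<bar>d0\<bar> \<le> 1" "\<bar>d1\<bar> \<le> 1"
    using assms unfolding d0_def d1_def by auto
  have A: "\<bar>g0 * (d1 - d0) - g0 * d0 * d1 / g1\<bar> \<le> 3 * g0"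
  proof -
    have "\<bar>g0 * d0 * d1 / g1\<bar> = (g0 / g1) * (\<bar>d0\<bar> * \<bar>d1\<bar>)" using assms g1 by (simp add: abs_mult)
    also have "\<dots> \<le> 2 * 1" using g1 d by (intro mult_mono) (auto simp: field_simps mult_le_one)
    finally have "\<bar>g0 * d0 * d1 / g1\<bar> \<le> 2" by simp
    moreover have "\<bar>g0 * (d1 - d0)\<bar> \<le> g0 * 2" using assms d by (simp add: abs_mult)
    ultimately have "\<bar>g0 * (d1 - d0) - g0 * d0 * d1 / g1\<bar> \<le> g0 * 2 + 2"
      by (intro order_trans[OF abs_triangle_ineq4 add_mono])
    then show ?thesis by (rule order_trans) (use assms(1) in linarith)
  qed
  have B: "\<bar>w * d0 - 2 * w * g0 * g2 / g1\<bar> \<le> 5 * (\<bar>w\<bar> * g0)"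
  proof -
    have "\<bar>2 * w * g0 * g2 / g1\<bar> = \<bar>w\<bar> * (2 * g0) * (g2 / g1)" using assms g1 by (simp add: abs_mult)
    also have "\<dots> \<le> \<bar>w\<bar> * (2 * g0) * 2" using assms g1 by (intro mult_left_mono) (auto simp: field_simps)
    finally have "\<bar>2 * w * g0 * g2 / g1\<bar> \<le> 4 * (\<bar>w\<bar> * g0)" by simp
    moreover have "\<bar>w * d0\<bar> \<le> \<bar>w\<bar> * g0"
      using d assms(1) by (simp add: abs_mult) (intro mult_left_mono, auto)
    ultimately have "\<bar>w * d0 - 2 * w * g0 * g2 / g1\<bar> \<le> \<bar>w\<bar> * g0 + 4 * (\<bar>w\<bar> * g0)"
      by (intro order_trans[OF abs_triangle_ineq4 add_mono])
    then show ?thesis by linarith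
  qed
  have C: "\<bar>w\<^sup>2 * g2 / g1 + w\<^sup>2\<bar> \<le> 3 * (\<bar>w\<bar> * g0)"
  proof -
    have "w\<^sup>2 * (g2 / g1) \<le> w\<^sup>2 * 2" using g1 by (intro mult_left_mono) (auto simp: field_simps)
    moreover have "w\<^sup>2 \<le> \<bar>w\<bar> * g0"
      using mult_left_mono[OF w abs_ge_zero[of w]] by (simp add: power2_eq_square)
    moreover have "\<bar>w\<^sup>2 * g2 / g1 + w\<^sup>2\<bar> = w\<^sup>2 * (g2 / g1) + w\<^sup>2" using g1 by simp
    ultimately show ?thesis by linarith
  qed
  have "g1 \<noteq> 0" using g1 by simp
  have "\<bar>g1 * (drift g0 g1 w x y + drift g1 g2 w y z)\<bar>
      \<le> (\<bar>g0 * (d1 - d0) - g0 * d0 * d1 / g1\<bar> + \<bar>w * d0 - 2 * w * g0 * g2 / g1\<bar> / 2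
          + \<bar>w\<^sup>2 * g2 / g1 + w\<^sup>2\<bar>) * ?u"
    unfolding drift_sum_eq[OF \<open>g1 \<noteq> 0\<close> rec] d0_def d1_def by (rule abs_quadratic_form_le)
  also have "\<dots> \<le> (3 * g0 + 5 * (\<bar>w\<bar> * g0) / 2 + 3 * (\<bar>w\<bar> * g0)) * ?u"
    using A B C by (intro mult_right_mono add_mono divide_right_mono) auto
  also have "\<dots> \<le> g0 * (3 + 6 * \<bar>w\<bar>) * ?u"
    using mult_nonneg_nonneg[of "\<bar>w\<bar>" g0] assms(1)
    by (intro mult_right_mono) (auto simp: algebra_simps)
  also have "\<dots> \<le> (2 * g1) * (3 + 6 * \<bar>w\<bar>) * ?u"
    using g1 by (intro mult_right_mono) auto
  also have "\<dots> = g1 * ((6 + 12 * \<bar>w\<bar>) * ?u)" by (simp add: algebra_simps)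
  finally have "g1 * \<bar>drift g0 g1 w x y + drift g1 g2 w y z\<bar> \<le> g1 * ((6 + 12 * \<bar>w\<bar>) * ?u)"
    using g1 by (simp only: abs_mult abs_of_pos)
  then show ?thesis using g1 by simp
qed

lemma abs_relative_increment_diff_le:
  fixes g0 g1 g2 :: real
  assumes "16 \<le> g0" and "\<bar>g1 - g0\<bar> \<le> 1" and "\<bar>g2 - g1\<bar> \<le> 1"
  shows "\<bar>(g1 - g0) / g1 - (g2 - g1) / g2\<bar>
    \<le> (2 * \<bar>(g2 - g1) - (g1 - g0)\<bar> + 4 * (\<bar>g2 - g1\<bar> / g0)) / g0"
proof -
  define d0 d1 where "d0 = g1 - g0" and "d1 = g2 - g1"
  have g: "0 < g1" "0 < g2" "g0 \<le> 2 * g1" "g0 \<le> 2 * g2" and d: "\<bar>d0\<bar> \<le> 1"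
    using assms unfolding d0_def d1_def by auto
  have "d0 / g1 - d1 / g2 = d0 * d1 / (g1 * g2) - (d1 - d0) / g2"
    using g by (simp add: d1_def field_simps)
  then have "\<bar>d0 / g1 - d1 / g2\<bar> \<le> \<bar>d1\<bar> / (g1 * g2) + \<bar>d1 - d0\<bar> / g2"
    using g d mult_left_le_one_le[of "\<bar>d1\<bar>" "\<bar>d0\<bar>"]
    by (auto simp: abs_mult divide_right_mono intro!: order_trans[OF abs_triangle_ineq4 add_mono])
  also have "\<dots> \<le> 4 * (\<bar>d1\<bar> / g0) / g0 + 2 * \<bar>d1 - d0\<bar> / g0"
  proof (intro add_mono)
    have "g0 * g0 * \<bar>d1\<bar> \<le> (2 * g1) * (2 * g2) * \<bar>d1\<bar>"
      using g assms(1) by (intro mult_right_mono mult_mono) auto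
    then show "\<bar>d1\<bar> / (g1 * g2) \<le> 4 * (\<bar>d1\<bar> / g0) / g0"
      using g assms(1) by (simp add: field_simps)
    have "g0 * \<bar>d1 - d0\<bar> \<le> (2 * g2) * \<bar>d1 - d0\<bar>" using g by (intro mult_right_mono) auto
    then show "\<bar>d1 - d0\<bar> / g2 \<le> 2 * \<bar>d1 - d0\<bar> / g0"
      using g assms(1) by (simp add: field_simps)
  qed
  finally show ?thesis unfolding d0_def d1_def by (simp add: add_divide_distrib)
qed

lemma abs_corrected_energy_step_le:
  assumes "16 \<le> g0" and w: "\<bar>w\<bar> \<le> g0" and "\<bar>g1 - g0\<bar> \<le> 1" and "\<bar>g2 - g1\<bar> \<le> 1"
    and rec: "g1 * z = w * y - g0 * x"
  shows "\<bar>corrected_energy g1 g2 w y z - corrected_energy g0 g1 w x y\<bar>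
    \<le> (14 + 12 * \<bar>w\<bar>) * (\<bar>(g2 - g1) - (g1 - g0)\<bar> + \<bar>g2 - g1\<bar> / g0) * (x\<^sup>2 + y\<^sup>2)"
proof -
  let ?u = "x\<^sup>2 + y\<^sup>2"
  let ?D0 = "drift g0 g1 w x y" and ?D1 = "drift g1 g2 w y z"
  let ?c = "(g1 - g0) / g1 - (g2 - g1) / g2"
  define a b where "a = \<bar>(g2 - g1) - (g1 - g0)\<bar>" and "b = \<bar>g2 - g1\<bar> / g0"
  have g: "0 < g1" "0 < g2" "g0 \<le> 2 * g2" using assms by auto
  have ab: "0 \<le> a" "0 \<le> b" "0 \<le> ?u" using assms unfolding a_def b_def by auto
  have "\<bar>?c * ?D0\<bar> \<le> (2 * a + 4 * b) / g0 * (4 * g0 * ?u)"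
    unfolding abs_mult a_def b_def using abs_relative_increment_diff_le[OF assms(1,3,4)] abs_drift_le[OF w] assms
    by (intro mult_mono) auto
  also have "\<dots> = (8 * a + 16 * b) * ?u" using assms(1) by (simp add: field_simps)
  finally have first: "\<bar>?c * ?D0\<bar> \<le> (8 * a + 16 * b) * ?u" .
  have "g0 * \<bar>g2 - g1\<bar> \<le> (2 * g2) * \<bar>g2 - g1\<bar>" using g by (intro mult_right_mono) auto
  then have "\<bar>(g2 - g1) / g2\<bar> \<le> 2 * b"
    using g assms(1) unfolding b_def by (simp add: field_simps)
  then have second: "\<bar>(g2 - g1) / g2 * (?D0 + ?D1)\<bar> \<le> (2 * b) * ((6 + 12 * \<bar>w\<bar>) * ?u)"
    unfolding abs_mult using abs_drift_sum_le[OF assms] ab by (intro mult_mono) auto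
  have nonzero: "g1 \<noteq> 0" "g2 \<noteq> 0" using g by auto
  have "\<bar>corrected_energy g1 g2 w y z - corrected_energy g0 g1 w x y\<bar>
      = \<bar>?c * ?D0 + (g2 - g1) / g2 * (?D0 + ?D1)\<bar> / 2"
    unfolding corrected_energy_step[OF nonzero rec] by simp
  also have "\<dots> \<le> (\<bar>?c * ?D0\<bar> + \<bar>(g2 - g1) / g2 * (?D0 + ?D1)\<bar>) / 2"
    by (intro divide_right_mono abs_triangle_ineq) simp
  also have "\<dots> \<le> (4 * a + (14 + 12 * \<bar>w\<bar>) * b) * ?u"
    using first second by (simp add: algebra_simps)
  also have "\<dots> \<le> (14 + 12 * \<bar>w\<bar>) * (a + b) * ?u"
    using ab by (intro mult_right_mono) (auto simp: algebra_simps)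
  finally show ?thesis unfolding a_def b_def .
qed

locale jacobi_coefficients =
  fixes \<gamma> :: "nat \<Rightarrow> real"
  assumes pos: "\<And>n. 0 < \<gamma> n"
    and unbounded: "filterlim \<gamma> at_top sequentially"
    and increment_tendsto_zero: "(\<lambda>n. \<gamma> (Suc n) - \<gamma> n) \<longlonglongrightarrow> 0"
    and summable_increment: "summable (\<lambda>n. \<bar>\<gamma> (Suc n) - \<gamma> n\<bar> / (\<gamma> n)\<^sup>2)"
    and summable_second_increment:
      "summable (\<lambda>n. \<bar>(\<gamma> (Suc (Suc n)) - \<gamma> (Suc n)) - (\<gamma> (Suc n) - \<gamma> n)\<bar> / \<gamma> n)"
begin

abbreviation p :: "nat \<Rightarrow> real \<Rightarrow> real" where
  "p n w \<equiv> poly (opoly \<gamma> n) w"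

definition consecutive_sq :: "real \<Rightarrow> nat \<Rightarrow> real" where
  "consecutive_sq w n = (p n w)\<^sup>2 + (p (Suc n) w)\<^sup>2"

definition corrected_energy_seq :: "real \<Rightarrow> nat \<Rightarrow> real" where
  "corrected_energy_seq w n = corrected_energy (\<gamma> n) (\<gamma> (Suc n)) w (p n w) (p (Suc n) w)"

lemma recurrence: "\<gamma> (Suc n) * p (Suc (Suc n)) w = w * p (Suc n) w - \<gamma> n * p n w"
  using poly_opoly_Suc_Suc[of \<gamma> n w] pos[of "Suc n"] by simp

lemma consecutive_sq_pos: "0 < consecutive_sq w n"
  using poly_opoly_consecutive_nonzero[of \<gamma> n w, OF pos] unfolding consecutive_sq_def
  by (auto simp: add_pos_nonneg add_nonneg_pos)

lemma eventually_large_slowly_varying: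
  "eventually (\<lambda>m. c \<le> \<gamma> m \<and> \<bar>\<gamma> (Suc m) - \<gamma> m\<bar> \<le> 1) sequentially"
proof -
  have "eventually (\<lambda>m. c \<le> \<gamma> m) sequentially"
    using unbounded by (simp add: filterlim_at_top)
  moreover have "eventually (\<lambda>m. \<bar>\<gamma> (Suc m) - \<gamma> m\<bar> < 1) sequentially"
    using tendstoD[OF increment_tendsto_zero, of 1] by (simp add: dist_real_def)
  ultimately show ?thesis by eventually_elim auto
qed

lemma summable_shifted_increment:
  "summable (\<lambda>m. \<bar>\<gamma> (Suc (Suc m)) - \<gamma> (Suc m)\<bar> / (\<gamma> m)\<^sup>2)"
proof (rule summable_comparison_test_ev)
  have "summable (\<lambda>m. \<bar>\<gamma> (Suc (Suc m)) - \<gamma> (Suc m)\<bar> / (\<gamma> (Suc m))\<^sup>2)"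
    using summable_increment by (subst summable_Suc_iff[where f = "\<lambda>n. \<bar>\<gamma> (Suc n) - \<gamma> n\<bar> / (\<gamma> n)\<^sup>2"])
  then show "summable (\<lambda>m. 4 * (\<bar>\<gamma> (Suc (Suc m)) - \<gamma> (Suc m)\<bar> / (\<gamma> (Suc m))\<^sup>2))"
    by (rule summable_mult)
  show "eventually (\<lambda>m. norm (\<bar>\<gamma> (Suc (Suc m)) - \<gamma> (Suc m)\<bar> / (\<gamma> m)\<^sup>2)
      \<le> 4 * (\<bar>\<gamma> (Suc (Suc m)) - \<gamma> (Suc m)\<bar> / (\<gamma> (Suc m))\<^sup>2)) sequentially"
    using eventually_large_slowly_varying[of 1]
  proof eventually_elim
    case (elim m)
    then have "(\<gamma> (Suc m))\<^sup>2 \<le> (2 * \<gamma> m)\<^sup>2"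
      using pos[of "Suc m"] by (intro power_mono) auto
    then have "(\<gamma> (Suc m))\<^sup>2 \<le> 4 * (\<gamma> m)\<^sup>2" by (simp add: power_mult_distrib)
    then have "(\<gamma> (Suc m))\<^sup>2 * \<bar>\<gamma> (Suc (Suc m)) - \<gamma> (Suc m)\<bar>
        \<le> (4 * (\<gamma> m)\<^sup>2) * \<bar>\<gamma> (Suc (Suc m)) - \<gamma> (Suc m)\<bar>"
      by (rule mult_right_mono) simp
    then show ?case using pos[of m] pos[of "Suc m"] by (simp add: field_simps)
  qed
qed

lemma eventually_corrected_energy_bounds:
  "eventually (\<lambda>m. \<gamma> m * consecutive_sq w m / 4 \<le> corrected_energy_seq w m
     \<and> \<bar>corrected_energy_seq w m - energy (\<gamma> m) w (p m w) (p (Suc m) w)\<bar>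
         \<le> 4 * \<bar>\<gamma> (Suc m) - \<gamma> m\<bar> * consecutive_sq w m
     \<and> \<bar>corrected_energy_seq w (Suc m) - corrected_energy_seq w m\<bar>
         \<le> (14 + 12 * \<bar>w\<bar>) * (\<bar>(\<gamma> (Suc (Suc m)) - \<gamma> (Suc m)) - (\<gamma> (Suc m) - \<gamma> m)\<bar>
             + \<bar>\<gamma> (Suc (Suc m)) - \<gamma> (Suc m)\<bar> / \<gamma> m) * consecutive_sq w m) sequentially"
proof -
  note regular = eventually_large_slowly_varying[of "max 16 \<bar>w\<bar>"]
  from eventually_conj[OF regular eventually_sequentially_Suc[THEN iffD2, OF regular]]
  show ?thesis
  proof eventually_elim
    case (elim m)
    then have "16 \<le> \<gamma> m" "\<bar>w\<bar> \<le> \<gamma> m" "\<bar>\<gamma> (Suc m) - \<gamma> m\<bar> \<le> 1"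
      "\<bar>\<gamma> (Suc (Suc m)) - \<gamma> (Suc m)\<bar> \<le> 1" by auto
    note hyps = this(1-3) and step = abs_corrected_energy_step_le[OF this recurrence]
    show ?case
      using corrected_energy_bounds[OF hyps] step
      unfolding corrected_energy_seq_def consecutive_sq_def by simp
  qed
qed

lemma corrected_energy_seq_tendsto_pos: "\<exists>c>0. corrected_energy_seq w \<longlonglongrightarrow> c"
proof -
  let ?T = "corrected_energy_seq w" and ?K = "14 + 12 * \<bar>w\<bar>"
  define e where "e m = 4 * ?K * (\<bar>(\<gamma> (Suc (Suc m)) - \<gamma> (Suc m)) - (\<gamma> (Suc m) - \<gamma> m)\<bar> / \<gamma> m
    + \<bar>\<gamma> (Suc (Suc m)) - \<gamma> (Suc m)\<bar> / (\<gamma> m)\<^sup>2)" for m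
  obtain N where N: "\<And>m. N \<le> m \<Longrightarrow> \<gamma> m * consecutive_sq w m / 4 \<le> ?T m
     \<and> \<bar>?T (Suc m) - ?T m\<bar> \<le> ?K * (\<bar>(\<gamma> (Suc (Suc m)) - \<gamma> (Suc m)) - (\<gamma> (Suc m) - \<gamma> m)\<bar>
             + \<bar>\<gamma> (Suc (Suc m)) - \<gamma> (Suc m)\<bar> / \<gamma> m) * consecutive_sq w m"
    using eventually_corrected_energy_bounds[of w] unfolding eventually_sequentially by blast
  have T_pos: "0 < ?T m" if "N \<le> m" for m
    using N[OF that] mult_pos_pos[OF pos[of m] consecutive_sq_pos[of w m]] by linarith
  have "\<bar>?T (Suc m) - ?T m\<bar> \<le> e m * ?T m" if "N \<le> m" for m
  proof -
    let ?C = "?K * (\<bar>(\<gamma> (Suc (Suc m)) - \<gamma> (Suc m)) - (\<gamma> (Suc m) - \<gamma> m)\<bar>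
             + \<bar>\<gamma> (Suc (Suc m)) - \<gamma> (Suc m)\<bar> / \<gamma> m)"
    have "consecutive_sq w m \<le> 4 * ?T m / \<gamma> m"
      using N[OF that] pos[of m] by (simp add: field_simps)
    moreover have "0 \<le> ?C" using pos[of m] by auto
    ultimately have "?C * consecutive_sq w m \<le> ?C * (4 * ?T m / \<gamma> m)" by (rule mult_left_mono)
    also have "\<dots> = e m * ?T m" using pos[of m] by (simp add: e_def field_simps power2_eq_square)
    finally show ?thesis using N[OF that] by linarith
  qed
  moreover have "summable e"
    unfolding e_def using summable_second_increment summable_shifted_increment
    by (intro summable_mult summable_add)
  ultimately show ?thesis using T_pos by (intro tendsto_pos_if_summable_relative_increments[of N]) auto
qed

lemma weighted_energy_tendsto_pos: "\<exists>c>0. (\<lambda>n. \<gamma> n * consecutive_sq w n) \<longlonglongrightarrow> c"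
proof -
  let ?T = "corrected_energy_seq w" and ?\<beta> = "\<lambda>n. \<gamma> n * consecutive_sq w n"
  obtain c where "0 < c" and c: "?T \<longlonglongrightarrow> c" using corrected_energy_seq_tendsto_pos by blast
  have "eventually (\<lambda>m. norm (?\<beta> m - ?T m)
      \<le> ((2 * \<bar>w\<bar> + 16 * \<bar>\<gamma> (Suc m) - \<gamma> m\<bar>) / \<gamma> m) * ?T m) sequentially"
    using eventually_corrected_energy_bounds[of w]
  proof eventually_elim
    case (elim m)
    let ?u = "consecutive_sq w m"
    let ?R = "energy (\<gamma> m) w (p m w) (p (Suc m) w)"
    have "\<bar>?\<beta> m - ?T m\<bar> \<le> \<bar>?\<beta> m - ?R\<bar> + \<bar>?T m - ?R\<bar>"
      using abs_triangle_ineq4[of "?\<beta> m - ?R" "?T m - ?R"] by simp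
    also have "\<dots> \<le> \<bar>w\<bar> * ?u / 2 + 4 * \<bar>\<gamma> (Suc m) - \<gamma> m\<bar> * ?u"
      using abs_cross_term_le[of w "\<bar>w\<bar>"] elim
      by (intro add_mono) (simp_all add: consecutive_sq_def energy_def)
    also have "\<dots> = (\<bar>w\<bar> / 2 + 4 * \<bar>\<gamma> (Suc m) - \<gamma> m\<bar>) * ?u" by (simp add: algebra_simps)
    also have "\<dots> \<le> (\<bar>w\<bar> / 2 + 4 * \<bar>\<gamma> (Suc m) - \<gamma> m\<bar>) * (4 * ?T m / \<gamma> m)"
      using elim pos[of m] by (intro mult_left_mono) (auto simp: field_simps)
    also have "\<dots> = ((2 * \<bar>w\<bar> + 16 * \<bar>\<gamma> (Suc m) - \<gamma> m\<bar>) / \<gamma> m) * ?T m"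
      using pos[of m] by (simp add: field_simps)
    finally show ?case by simp
  qed
  moreover have "(\<lambda>m. ((2 * \<bar>w\<bar> + 16 * \<bar>\<gamma> (Suc m) - \<gamma> m\<bar>) / \<gamma> m) * ?T m) \<longlonglongrightarrow> 0"
    using tendsto_mult[OF tendsto_mult[OF tendsto_add[OF tendsto_const
        tendsto_mult[OF tendsto_const tendsto_rabs_zero[OF increment_tendsto_zero]]]
        tendsto_inverse_0_at_top[OF unbounded]] c]
    by (simp add: divide_inverse)
  ultimately have "(\<lambda>m. ?\<beta> m - ?T m) \<longlonglongrightarrow> 0" by (rule Lim_null_comparison)
  from tendsto_add[OF this c] \<open>0 < c\<close> show ?thesis by auto
qed

lemma Bseq_sum_opoly_products:
  assumes "\<omega> \<noteq> \<sigma>"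
  shows "Bseq (\<lambda>n. \<Sum>k\<le>n. p k \<omega> * p k \<sigma>)"
proof -
  have "Bseq (\<lambda>n. \<gamma> n * consecutive_sq v n)" for v
    using weighted_energy_tendsto_pos[of v] by (auto intro: convergent_imp_Bseq convergentI)
  then obtain K1 K2 where K1: "\<And>n. norm (\<gamma> n * consecutive_sq \<omega> n) \<le> K1"
    and K2: "\<And>n. norm (\<gamma> n * consecutive_sq \<sigma> n) \<le> K2"
    unfolding Bseq_def by meson
  have "norm (\<Sum>k\<le>n. p k \<omega> * p k \<sigma>) \<le> sqrt (K1 * K2) / \<bar>\<omega> - \<sigma>\<bar>" for n
  proof -
    have "\<bar>\<omega> - \<sigma>\<bar> * \<bar>\<Sum>k\<le>n. p k \<omega> * p k \<sigma>\<bar>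
        = \<gamma> n * \<bar>p (Suc n) \<omega> * p n \<sigma> - p n \<omega> * p (Suc n) \<sigma>\<bar>"
      using pos[of n] by (simp only: abs_mult[symmetric] christoffel_darboux[OF pos]) (simp add: abs_mult)
    also have "\<dots> \<le> \<gamma> n * sqrt (consecutive_sq \<omega> n * consecutive_sq \<sigma> n)"
      using abs_cross_difference_le[of "p (Suc n) \<omega>" "p n \<sigma>" "p n \<omega>" "p (Suc n) \<sigma>"] pos[of n]
      by (intro mult_left_mono) (simp_all add: consecutive_sq_def add.commute)
    also have "\<dots> = sqrt ((\<gamma> n * consecutive_sq \<omega> n) * (\<gamma> n * consecutive_sq \<sigma> n))"
      using pos[of n] by (simp add: real_sqrt_mult power2_eq_square mult_ac)
    also have "\<dots> \<le> sqrt (K1 * K2)"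
      using K1[of n] K2[of n] mult_pos_pos[OF pos consecutive_sq_pos, of n \<omega> n]
        mult_pos_pos[OF pos consecutive_sq_pos, of n \<sigma> n]
      by (intro real_sqrt_le_mono mult_mono) auto
    finally show ?thesis using assms by (simp add: field_simps)
  qed
  then show ?thesis by (rule BseqI')
qed

lemma sum_opoly_products_over_harmonic_tendsto_zero:
  assumes "\<omega> \<noteq> \<sigma>" and "\<not> summable (\<lambda>j. 1 / \<gamma> j)"
  shows "(\<lambda>n. (\<Sum>k\<le>n. p k \<omega> * p k \<sigma>) / (\<Sum>j\<le>n. 1 / \<gamma> j)) \<longlonglongrightarrow> 0"
proof -
  have "(\<lambda>n. inverse (\<Sum>j\<le>n. 1 / \<gamma> j)) \<longlonglongrightarrow> 0"
    using filterlim_sum_atMost_at_top[OF _ assms(2)] pos by (intro tendsto_inverse_0_at_top) (simp add: less_imp_le)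
  moreover obtain K where "\<And>n. norm (\<Sum>k\<le>n. p k \<omega> * p k \<sigma>) \<le> K"
    using Bseq_sum_opoly_products[OF assms(1)] unfolding Bseq_def by blast
  ultimately have "(\<lambda>n. inverse (\<Sum>j\<le>n. 1 / \<gamma> j) * (\<Sum>k\<le>n. p k \<omega> * p k \<sigma>)) \<longlonglongrightarrow> 0"
    by (intro lim_null_mult_right_bounded[where B = K]) auto
  then show ?thesis by (simp add: divide_inverse mult.commute)
qed

lemma plane_wave_in_classL_beta_tendsto_pos:
  "plane_wave \<omega> \<in> classL \<gamma> \<and> (\<forall>t. \<exists>c>0. (\<lambda>n. beta \<gamma> (plane_wave \<omega>) n t) \<longlonglongrightarrow> c)"
proof -
  obtain c where "0 < c" and c: "(\<lambda>n. \<gamma> n * consecutive_sq \<omega> n) \<longlonglongrightarrow> c"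
    using weighted_energy_tendsto_pos by blast
  have beta: "beta \<gamma> (plane_wave \<omega>) = (\<lambda>n t. \<gamma> n * consecutive_sq \<omega> n)"
    by (intro ext) (unfold beta_plane_wave consecutive_sq_def, rule refl)
  show ?thesis
    unfolding classL_def mem_Collect_eq beta
    using smoothRC_plane_wave uniform_limit_of_tendsto[OF c] \<open>0 < c\<close> c by blast
qed

lemma Kop_kernel_over_harmonic_tendsto_zero:
  assumes "\<omega> \<noteq> \<sigma>" and "\<not> summable (\<lambda>j. 1 / \<gamma> j)"
  shows "(\<lambda>n. (\<Sum>k\<le>n. Kop \<gamma> k (plane_wave \<omega>) t * Kop \<gamma> k (\<lambda>s. cnj (plane_wave \<sigma> s)) t)
      / of_real (\<Sum>j\<le>n. 1 / \<gamma> j)) \<longlonglongrightarrow> 0"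
proof -
  define E where "E = plane_wave \<omega> t * plane_wave (- \<sigma>) t"
  have "(\<Sum>k\<le>n. Kop \<gamma> k (plane_wave \<omega>) t * Kop \<gamma> k (\<lambda>s. cnj (plane_wave \<sigma> s)) t)
      = of_real (\<Sum>k\<le>n. p k \<omega> * p k \<sigma>) * E" for n
    unfolding Kop_plane_wave_mult_Kop_cnj E_def[symmetric] of_real_sum sum_distrib_right ..
  then have eq: "(\<Sum>k\<le>n. Kop \<gamma> k (plane_wave \<omega>) t * Kop \<gamma> k (\<lambda>s. cnj (plane_wave \<sigma> s)) t)
      / of_real (\<Sum>j\<le>n. 1 / \<gamma> j)
    = of_real ((\<Sum>k\<le>n. p k \<omega> * p k \<sigma>) / (\<Sum>j\<le>n. 1 / \<gamma> j)) * E" for n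
    by (simp only: of_real_divide times_divide_eq_left)
  have "(\<lambda>n. complex_of_real ((\<Sum>k\<le>n. p k \<omega> * p k \<sigma>) / (\<Sum>j\<le>n. 1 / \<gamma> j))) \<longlonglongrightarrow> 0"
    using tendsto_of_real[OF sum_opoly_products_over_harmonic_tendsto_zero[OF assms]] by (simp only: of_real_0)
  then show ?thesis unfolding eq by (rule tendsto_mult_left_zero)
qed

end

theorem theorem32:
  fixes \<gamma> :: "nat \<Rightarrow> real"
  assumes pos: "\<And>n. \<gamma> n > 0"
    and C1: "filterlim \<gamma> at_top sequentially"
    and C2: "(\<lambda>n. \<gamma> (Suc n) - \<gamma> n) \<longlonglongrightarrow> 0"
    and C3: "\<exists>n0 m0. \<forall>n\<ge>n0. \<forall>m\<ge>m0. \<gamma> (n + m) > \<gamma> n"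
    and C4: "\<not> summable (\<lambda>j. 1 / \<gamma> j)"
    and C5: "\<exists>\<kappa>>1. summable (\<lambda>j. \<gamma> j powr (- \<kappa>))"
    and C6: "summable (\<lambda>n. \<bar>\<gamma> (Suc n) - \<gamma> n\<bar> / (\<gamma> n)\<^sup>2)"
    and C7: "summable (\<lambda>n. \<bar>(\<gamma> (Suc (Suc n)) - \<gamma> (Suc n)) - (\<gamma> (Suc n) - \<gamma> n)\<bar> / \<gamma> n)"
  shows "(\<forall>\<omega>::real. (\<lambda>t. exp (\<i> * complex_of_real (\<omega> * t))) \<in> classL \<gamma> \<and>
            (\<forall>t. \<exists>c>0. (\<lambda>n. beta \<gamma> (\<lambda>s. exp (\<i> * complex_of_real (\<omega> * s))) n t) \<longlonglongrightarrow> c))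
       \<and> (\<forall>\<omega> \<sigma> t::real. \<omega> \<noteq> \<sigma> \<longrightarrow>
            (\<lambda>n. (\<Sum>k\<le>n. Kop \<gamma> k (\<lambda>s. exp (\<i> * complex_of_real (\<omega> * s))) t *
                          Kop \<gamma> k (\<lambda>s. cnj (exp (\<i> * complex_of_real (\<sigma> * s)))) t)
                 / complex_of_real (\<Sum>j\<le>n. 1 / \<gamma> j)) \<longlonglongrightarrow> 0)"
proof -
  interpret jacobi_coefficients \<gamma> using pos C1 C2 C6 C7 by unfold_locales
  show ?thesis
    using plane_wave_in_classL_beta_tendsto_pos Kop_kernel_over_harmonic_tendsto_zero[OF _ C4] by blast
qed

end
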